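(* Let $q\in\mathbb{C}$ with $0<|q|<1$, let $N$ be a nonnegative integer and $\rho_1,\rho_2$ complex parameters (such that all terms below are well defined). Let $(\alpha_n)_{n\in\mathbb{Z}}$ and $(\beta_n)_{n\ge0}$ be sequences related by \[ \beta_n=\sum_{r=-\infty}^\infty\frac{\alpha_r}{(q)_{n-r}(q)_{n+r+1}}\qquad\text{for all } n\ge 0. \] Then \[ \sum_{n=-\infty}^\infty\frac{(\rho_1,\rho_2, q^{-N})_n}{(q^2/\rho_1, q^2/\rho_2, q^{N+2})_n} \left(\frac{q^{2+N}}{\rho_1\rho_2}\right)^n(-1)^nq^{-\binom{n}{2}}\frac{\alpha_n}{1-q} =\frac{(q^2, q^2/\rho_1\rho_2)_N}{(q^2/\rho_1, q^2/\rho_2)_N} \sum_{n\geq 0}\frac{(\rho_1, \rho_2, q^{-N})_n\,q^n\beta_n}{(\rho_1\rho_2q^{-N-1})_n}. \]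
   Context: For an integer $n$, the $q$-shifted factorial is $(a)_n=(a;q)_n$ with $(a)_0=1$, $(a)_n=(1-a)(1-aq)\cdots(1-aq^{n-1})$ for $n\ge1$, and $(a)_n=[(1-aq^{-1})(1-aq^{-2})\cdots(1-aq^{n})]^{-1}$ for $n\le -1$; in particular $1/(q)_n=0$ for $n<0$. Also $(a_1,\ldots,a_m)_n=(a_1)_n\cdots(a_m)_n$, and $\binom{n}{2}=n(n-1)/2$ for all integers $n$. *)

theory Defs
  imports "HOL-Analysis.Analysis"
begin

text \<open>q-shifted factorial (a;q)_n for integer n, following the paper's convention:
  (a)_n = (1-a)(1-aq)...(1-aq^(n-1)) for n >= 0, and
  (a)_n = 1 / ((1-a q^(-1))(1-a q^(-2))...(1-a q^n)) for n <= -1.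
  (When the product for negative n vanishes, Isabelle's inverse 0 = 0 makes 1/(a)_n = 0,
  in agreement with the convention 1/(q)_n = 0 for n < 0.)\<close>
definition qpoch :: "complex \<Rightarrow> complex \<Rightarrow> int \<Rightarrow> complex" where
  "qpoch q a n =
     (if 0 \<le> n then (\<Prod>k<nat n. (1 - a * q ^ k))
      else inverse (\<Prod>k\<in>{1..nat (- n)}. (1 - a / q ^ k)))"

definition binom2 :: "int \<Rightarrow> int" where
  "binom2 n = n * (n - 1) div 2"

end

theory Submission
  imports Defs
begin

(* Both sides are finite sums: (q^-N)_n vanishes for n > N, 1/(q)_k vanishes for k < 0, and the
   left-hand coefficients vanish outside -N-1 <= r <= N.  Substituting the Bailey relation on the
   right and exchanging the two finite sums, the coefficient of alpha_r becomes a terminating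
   balanced 3phi2, which the q-Pfaff-Saalschutz formula evaluates to the left-hand coefficient for
   0 <= r <= N; both coefficients are invariant under r -> -r-1, which covers the remaining r.
   The q-Pfaff-Saalschutz formula is proved by induction on the length of the sum, the recurrence
   coming from a telescoping (WZ) certificate. *)

section \<open>Finite q-shifted factorials\<close>

definition qpochhammer :: "'a::comm_ring_1 \<Rightarrow> 'a \<Rightarrow> nat \<Rightarrow> 'a" where
  "qpochhammer q a k = (\<Prod>i<k. 1 - a * q ^ i)"

lemma qpochhammer_0 [simp]: "qpochhammer q a 0 = 1"
  by (simp add: qpochhammer_def)

lemma qpochhammer_Suc: "qpochhammer q a (Suc k) = qpochhammer q a k * (1 - a * q ^ k)"
  by (simp add: qpochhammer_def)

lemma qpochhammer_add: "qpochhammer q a (m + k) = qpochhammer q a m * qpochhammer q (a * q ^ m) k"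
  by (induction k) (simp_all add: qpochhammer_Suc power_add mult_ac)

lemma qpochhammer_Suc_left: "qpochhammer q a (Suc k) = (1 - a) * qpochhammer q (a * q) k"
  using qpochhammer_add[of q a 1 k] by (simp add: qpochhammer_def)

lemma qpochhammer_eq_0_iff:
  "qpochhammer q (a :: 'a :: idom) k = 0 \<longleftrightarrow> (\<exists>i<k. a * q ^ i = 1)"
  by (auto simp: qpochhammer_def prod_zero_iff)

lemma qpochhammer_inverse_power_eq_0:
  fixes q :: "'a::field"
  shows "q \<noteq> 0 \<Longrightarrow> n < k \<Longrightarrow> qpochhammer q (inverse (q ^ n)) k = 0"
  by (auto simp: qpochhammer_eq_0_iff)

lemma qpoch_of_nat [simp]: "qpoch q a (int k) = qpochhammer q a k"
  by (simp add: qpoch_def qpochhammer_def)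

lemma qpochhammer_self_split:
  "qpochhammer q q (2 * s + 1) * qpochhammer q (q ^ (2 * s + 2)) m
    = (1 - q) * qpochhammer q (q\<^sup>2) (s + m) * qpochhammer q (q ^ (s + m + 2)) s"
proof -
  have "qpochhammer q q (2 * s + 1) * qpochhammer q (q ^ (2 * s + 2)) m = qpochhammer q q (2 * s + 1 + m)"
    unfolding qpochhammer_add by (simp flip: power_Suc)
  also have "2 * s + 1 + m = Suc (s + m) + s"
    by simp
  also have "qpochhammer q q (Suc (s + m) + s)
      = (1 - q) * qpochhammer q (q\<^sup>2) (s + m) * qpochhammer q (q ^ (s + m + 2)) s"
    unfolding qpochhammer_add qpochhammer_Suc_left by (simp add: power2_eq_square mult_ac)
  finally show ?thesis .
qed

lemma qpochhammer_power_nonzero: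
  fixes q :: "'a::idom"
  shows "\<forall>i>0. q ^ i \<noteq> 1 \<Longrightarrow> qpochhammer q (q ^ Suc e) k \<noteq> 0"
  by (auto simp: qpochhammer_eq_0_iff power_add[symmetric] simp del: power_Suc)

lemma qpochhammer_square_divide_nonzero:
  fixes q r :: "'a::field"
  assumes "r \<noteq> 0" "\<forall>m\<ge>1. r \<noteq> q ^ m"
  shows "qpochhammer q (q\<^sup>2 / r * q ^ e) k \<noteq> 0"
proof -
  have "q\<^sup>2 / r * q ^ e * q ^ i \<noteq> 1" for i
  proof
    assume "q\<^sup>2 / r * q ^ e * q ^ i = 1"
    then have "r = q ^ (i + e + 2)"
      using assms(1) by (simp add: field_simps power_add power2_eq_square)
    with assms(2)[rule_format, of "i + e + 2"] show False
      by simp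
  qed
  then show ?thesis
    by (simp add: qpochhammer_eq_0_iff)
qed

section \<open>The q-Pfaff-Saalschutz summation\<close>

(* The k-th term of the balanced series 3phi2(a, b, q^-m; c, a b q^(1-m) / c; q, q). *)
definition saalschutz_term :: "'a::field \<Rightarrow> 'a \<Rightarrow> 'a \<Rightarrow> 'a \<Rightarrow> nat \<Rightarrow> nat \<Rightarrow> 'a" where
  "saalschutz_term q a b c m k =
     q ^ k * qpochhammer q a k * qpochhammer q b k * qpochhammer q (inverse (q ^ m)) k
     / (qpochhammer q q k * qpochhammer q c k * qpochhammer q (a * b * q / (c * q ^ m)) k)"

definition saalschutz_certificate :: "'a::field \<Rightarrow> 'a \<Rightarrow> 'a \<Rightarrow> 'a \<Rightarrow> nat \<Rightarrow> nat \<Rightarrow> 'a" where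
  "saalschutz_certificate q a b c n j =
     qpochhammer q a (Suc j) * qpochhammer q b (Suc j) * qpochhammer q (inverse (q ^ n)) j
     * (1 - c * q ^ n / (a * b))
     / (qpochhammer q q j * qpochhammer q c j * qpochhammer q (a * b / (c * q ^ n)) (Suc j))"

definition saalschutz_factor :: "'a::field \<Rightarrow> 'a \<Rightarrow> 'a \<Rightarrow> 'a \<Rightarrow> nat \<Rightarrow> nat \<Rightarrow> 'a" where
  "saalschutz_factor q a b c n j =
     qpochhammer q a (Suc j) * qpochhammer q b (Suc j) * qpochhammer q (inverse (q ^ n)) j
     / (qpochhammer q q (Suc j) * qpochhammer q c (Suc j) * qpochhammer q (a * b / (c * q ^ n)) (Suc j))"

lemma saalschutz_term_Suc_Suc:
  fixes q :: "'a::field"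
  assumes "q \<noteq> 0"
  shows "saalschutz_term q a b c (Suc n) (Suc j)
    = saalschutz_factor q a b c n j * (q * q ^ j * (1 - 1 / (q * q ^ n)))"
proof -
  have "qpochhammer q (inverse (q ^ Suc n)) (Suc j) = (1 - 1 / (q * q ^ n)) * qpochhammer q (inverse (q ^ n)) j"
    using assms by (simp add: qpochhammer_Suc_left field_simps)
  moreover have "a * b * q / (c * q ^ Suc n) = a * b / (c * q ^ n)"
    using assms by simp
  ultimately show ?thesis
    by (simp add: saalschutz_term_def saalschutz_factor_def mult_ac)
qed

lemma saalschutz_term_Suc:
  fixes q a b c :: "'a::field" and n j :: nat
  defines "w \<equiv> a * b / (c * q ^ n)"
  assumes "qpochhammer q q (Suc j) \<noteq> 0" "qpochhammer q c (Suc j) \<noteq> 0"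
    and w: "\<forall>i\<le>Suc j. w * q ^ i \<noteq> 1"
  shows "saalschutz_term q a b c n (Suc j)
    = saalschutz_factor q a b c n j * (q * q ^ j * (1 - q ^ j / q ^ n) * (1 - w) / (1 - w * q * q ^ j))"
proof -
  have "qpochhammer q w (Suc j) \<noteq> 0"
    using w by (auto simp: qpochhammer_eq_0_iff)
  moreover have "1 - w \<noteq> 0" "1 - w * q * q ^ j \<noteq> 0"
    using w[rule_format, of 0] w[rule_format, of "Suc j"] by (auto simp: mult_ac)
  moreover have "(1 - w) * qpochhammer q (w * q) (Suc j) = qpochhammer q w (Suc j) * (1 - w * q * q ^ j)"
    using qpochhammer_Suc_left[of q w "Suc j"] qpochhammer_Suc[of q w "Suc j"] by (simp add: mult_ac)
  ultimately have "qpochhammer q (w * q) (Suc j) = qpochhammer q w (Suc j) * (1 - w * q * q ^ j) / (1 - w)"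
    by (simp add: field_simps)
  moreover have "qpochhammer q (inverse (q ^ n)) (Suc j) = qpochhammer q (inverse (q ^ n)) j * (1 - q ^ j / q ^ n)"
    by (simp add: qpochhammer_Suc divide_inverse mult_ac)
  moreover have "a * b * q / (c * q ^ n) = w * q"
    by (simp add: w_def)
  ultimately have "saalschutz_term q a b c n (Suc j)
      = q * q ^ j * qpochhammer q a (Suc j) * qpochhammer q b (Suc j)
        * (qpochhammer q (inverse (q ^ n)) j * (1 - q ^ j / q ^ n))
        / (qpochhammer q q (Suc j) * qpochhammer q c (Suc j)
           * (qpochhammer q w (Suc j) * (1 - w * q * q ^ j) / (1 - w)))"
    by (simp add: saalschutz_term_def)
  with assms \<open>qpochhammer q w (Suc j) \<noteq> 0\<close> \<open>1 - w \<noteq> 0\<close> \<open>1 - w * q * q ^ j \<noteq> 0\<close> show ?thesis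
    by (simp add: saalschutz_factor_def w_def[symmetric] field_simps)
qed

lemma saalschutz_certificate_Suc:
  "saalschutz_certificate q a b c n (Suc j) = saalschutz_factor q a b c n j
     * ((1 - a * q * q ^ j) * (1 - b * q * q ^ j) * (1 - q ^ j / q ^ n) * (1 - c * q ^ n / (a * b))
        / (1 - a * b / (c * q ^ n) * q * q ^ j))"
  unfolding saalschutz_certificate_def saalschutz_factor_def
    qpochhammer_Suc[of q _ "Suc j"] qpochhammer_Suc[of q "inverse (q ^ n)" j]
  by (simp add: divide_inverse mult_ac)

lemma saalschutz_certificate_eq_factor:
  fixes q :: "'a::field"
  assumes "a \<noteq> 0" "b \<noteq> 0" "qpochhammer q q (Suc j) \<noteq> 0" "qpochhammer q c (Suc j) \<noteq> 0"
    "qpochhammer q (a * b / (c * q ^ n)) (Suc j) \<noteq> 0"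
  shows "saalschutz_certificate q a b c n j
    = saalschutz_factor q a b c n j * ((1 - q * q ^ j) * (1 - c * q ^ j) * (1 - c * q ^ n / (a * b)))"
proof -
  define u v where "u = 1 - q * q ^ j" and "v = 1 - c * q ^ j"
  have "qpochhammer q q (Suc j) = qpochhammer q q j * u"
    and "qpochhammer q c (Suc j) = qpochhammer q c j * v"
    by (simp_all add: qpochhammer_Suc u_def v_def)
  with assms show ?thesis
    by (simp add: saalschutz_certificate_def saalschutz_factor_def field_simps flip: u_def v_def)
qed

lemma saalschutz_certificate_rational:
  fixes a b c q x y :: "'a::field"
  assumes "q \<noteq> 0" "y \<noteq> 0" "a \<noteq> 0" "b \<noteq> 0" "c \<noteq> 0"
    and w: "w = a * b / (c * y)" and wqx: "1 - w * q * x \<noteq> 0"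
  shows "(1 - c*y) * (1 - c*y/(a*b)) * (q*x * (1 - 1/(q*y)))
       - (1 - c*y/a) * (1 - c*y/b) * (q*x * (1 - x/y) * (1 - w) / (1 - w*q*x))
     = (1 - a*q*x) * (1 - b*q*x) * (1 - x/y) * (1 - c*y/(a*b)) / (1 - w*q*x)
       - (1 - q*x) * (1 - c*x) * (1 - c*y/(a*b))"
proof -
  have "c*y - a*b*q*x \<noteq> 0"
    using wqx assms unfolding w by (auto simp: field_simps)
  then show ?thesis
    using assms unfolding w by (simp add: field_simps)
qed

lemma saalschutz_term_difference:
  fixes q a b c :: "'a::field"
  assumes q0: "q \<noteq> 0" and qj: "\<forall>i>0. q ^ i \<noteq> 1"
    and a0: "a \<noteq> 0" and b0: "b \<noteq> 0" and c0: "c \<noteq> 0"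
    and hc: "\<forall>i<Suc n. c * q ^ i \<noteq> 1"
    and hw: "\<forall>i\<le>Suc n. a * b * q * q ^ i \<noteq> c * q ^ Suc n"
    and jn: "j \<le> n"
  shows "(1 - c * q ^ n) * (1 - c * q ^ n / (a * b)) * saalschutz_term q a b c (Suc n) (Suc j)
       - (1 - c * q ^ n / a) * (1 - c * q ^ n / b) * saalschutz_term q a b c n (Suc j)
     = saalschutz_certificate q a b c n (Suc j) - saalschutz_certificate q a b c n j"
proof -
  define w where "w = a * b / (c * q ^ n)"
  have w: "\<forall>i\<le>Suc j. w * q ^ i \<noteq> 1"
  proof (intro allI impI notI)
    fix i
    assume "i \<le> Suc j" "w * q ^ i = 1"
    then have "a * b * q * q ^ i = c * q ^ Suc n"
      using q0 c0 by (simp add: w_def field_simps)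
    with hw \<open>i \<le> Suc j\<close> jn show False
      by auto
  qed
  then have nz_w: "qpochhammer q (a * b / (c * q ^ n)) (Suc j) \<noteq> 0"
    and nz_wqx: "1 - w * q * q ^ j \<noteq> 0"
    using w[rule_format, of "Suc j"] by (auto simp: qpochhammer_eq_0_iff w_def mult_ac)
  have nz_q: "qpochhammer q q (Suc j) \<noteq> 0" and nz_c: "qpochhammer q c (Suc j) \<noteq> 0"
    using qj hc jn by (auto simp: qpochhammer_eq_0_iff simp flip: power_Suc)
  \<comment> \<open>all four terms are the common factor times the rational functions of the certificate identity\<close>
  show ?thesis
    unfolding saalschutz_term_Suc_Suc[OF q0] saalschutz_term_Suc[OF nz_q nz_c w[unfolded w_def]]
      saalschutz_certificate_Suc saalschutz_certificate_eq_factor[OF a0 b0 nz_q nz_c nz_w]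
      w_def[symmetric]
    using arg_cong[OF saalschutz_certificate_rational[OF q0 power_not_zero[OF q0] a0 b0 c0 w_def nz_wqx],
        of "\<lambda>t. saalschutz_factor q a b c n j * t"]
    by (simp only: right_diff_distrib mult.left_commute)
qed

lemma saalschutz_recurrence:
  fixes q a b c :: "'a::field"
  assumes q0: "q \<noteq> 0" and qj: "\<forall>i>0. q ^ i \<noteq> 1"
    and a0: "a \<noteq> 0" and b0: "b \<noteq> 0" and c0: "c \<noteq> 0"
    and hc: "\<forall>i<Suc n. c * q ^ i \<noteq> 1"
    and hw: "\<forall>i\<le>Suc n. a * b * q * q ^ i \<noteq> c * q ^ Suc n"
  shows "(1 - c * q ^ n) * (1 - c * q ^ n / (a * b)) * (\<Sum>k\<le>Suc n. saalschutz_term q a b c (Suc n) k)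
       = (1 - c * q ^ n / a) * (1 - c * q ^ n / b) * (\<Sum>k\<le>n. saalschutz_term q a b c n k)"
    (is "?A * _ = ?B * _")
proof -
  let ?t = "saalschutz_term q a b c" and ?G = "saalschutz_certificate q a b c n"
  have "a * b \<noteq> c * q ^ n"
    using hw[rule_format, of 0] by (auto simp: mult_ac)
  then have "?A * ?t (Suc n) 0 - ?B * ?t n 0 = ?G 0"
    using q0 a0 b0 c0 by (simp add: saalschutz_term_def saalschutz_certificate_def qpochhammer_Suc field_simps)
  moreover have "(\<Sum>j\<le>n. ?A * ?t (Suc n) (Suc j) - ?B * ?t n (Suc j)) = (\<Sum>j=0..n. ?G (Suc j) - ?G j)"
    using saalschutz_term_difference[OF assms] by (simp add: atLeast0AtMost)
  ultimately have "(\<Sum>k\<le>Suc n. ?A * ?t (Suc n) k - ?B * ?t n k) = ?G 0 + (\<Sum>j=0..n. ?G (Suc j) - ?G j)"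
    by (simp only: sum.atMost_Suc_shift)
  also have "\<dots> = ?G (Suc n)"
    by (simp add: sum_Suc_diff)
  also have "\<dots> = 0"
    using q0 by (simp add: saalschutz_certificate_def qpochhammer_inverse_power_eq_0)
  finally have "?A * (\<Sum>k\<le>Suc n. ?t (Suc n) k) = ?B * (\<Sum>k\<le>Suc n. ?t n k)"
    by (simp only: sum_subtractf sum_distrib_left[symmetric] right_minus_eq)
  moreover have "?t n (Suc n) = 0"
    using q0 by (simp add: saalschutz_term_def qpochhammer_inverse_power_eq_0)
  ultimately show ?thesis
    by simp
qed

theorem q_pfaff_saalschutz:
  fixes q a b c :: "'a::field"
  assumes q0: "q \<noteq> 0" and qj: "\<forall>i>0. q ^ i \<noteq> 1"
    and a0: "a \<noteq> 0" and b0: "b \<noteq> 0" and c0: "c \<noteq> 0"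
    and "\<forall>i<m. c * q ^ i \<noteq> 1"
    and "\<forall>i\<le>m. a * b * q * q ^ i \<noteq> c * q ^ m"
  shows "qpochhammer q c m * qpochhammer q (c / (a * b)) m * (\<Sum>k\<le>m. saalschutz_term q a b c m k)
       = qpochhammer q (c / a) m * qpochhammer q (c / b) m"
  using assms(6,7)
proof (induction m)
  case 0
  then show ?case
    by (simp add: saalschutz_term_def)
next
  case (Suc n)
  have "\<forall>i\<le>n. a * b * q * q ^ i \<noteq> c * q ^ n"
  proof (intro allI impI notI)
    fix i
    assume "i \<le> n" "a * b * q * q ^ i = c * q ^ n"
    then have "a * b * q * q ^ Suc i = c * q ^ Suc n"
      by (simp add: mult_ac)
    with Suc.prems \<open>i \<le> n\<close> show False
      by auto
  qed
  with Suc have IH: "qpochhammer q c n * qpochhammer q (c / (a * b)) n * (\<Sum>k\<le>n. saalschutz_term q a b c n k)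
       = qpochhammer q (c / a) n * qpochhammer q (c / b) n"
    by simp
  have "qpochhammer q c (Suc n) * qpochhammer q (c / (a * b)) (Suc n)
        * (\<Sum>k\<le>Suc n. saalschutz_term q a b c (Suc n) k)
      = qpochhammer q c n * qpochhammer q (c / (a * b)) n * ((1 - c * q ^ n) * (1 - c * q ^ n / (a * b))
        * (\<Sum>k\<le>Suc n. saalschutz_term q a b c (Suc n) k))"
    by (simp add: qpochhammer_Suc mult_ac)
  also have "\<dots> = (1 - c * q ^ n / a) * (1 - c * q ^ n / b) * (qpochhammer q c n
        * qpochhammer q (c / (a * b)) n * (\<Sum>k\<le>n. saalschutz_term q a b c n k))"
    unfolding saalschutz_recurrence[OF q0 qj a0 b0 c0 Suc.prems] by (simp add: mult_ac)
  also have "\<dots> = qpochhammer q (c / a) (Suc n) * qpochhammer q (c / b) (Suc n)"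
    unfolding IH by (simp add: qpochhammer_Suc mult_ac)
  finally show ?case .
qed

section \<open>Negative indices and reflection\<close>

lemma Suc_choose_two: "Suc m choose 2 = (m choose 2) + m"
  by (simp add: numeral_2_eq_2)

lemma binom2_of_nat: "binom2 (int s) = int (s choose 2)"
  by (cases s) (simp_all add: binom2_def choose_two zdiv_int algebra_simps)

lemma binom2_minus_Suc: "binom2 (- int s - 1) = int ((s choose 2) + 2 * s + 1)"
proof -
  have "(- int s - 1) * (- int s - 1 - 1) = int (Suc (Suc s) * (Suc (Suc s) - 1))"
    by (simp add: algebra_simps)
  then have "binom2 (- int s - 1) = int (Suc (Suc s) choose 2)"
    by (simp only: binom2_def choose_two zdiv_int) simp
  then show ?thesis
    by (simp add: Suc_choose_two)
qed

lemma powi_binom2_reflect: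
  fixes q z a1 a2 a3 :: "'a::field"
  assumes q0: "q \<noteq> 0" and z0: "z \<noteq> 0" and prod: "a1 * a2 * a3 = q * z"
  shows "- (a1 ^ (2 * s + 1)) * - (a2 ^ (2 * s + 1)) * - (a3 ^ (2 * s + 1))
         * (z powi (- int s - 1) * (-1) powi (- int s - 1) * q powi (- binom2 (- int s - 1)))
       = z powi int s * (-1) powi int s * q powi (- binom2 (int s))"
proof -
  have "a1 ^ (2 * s + 1) * a2 ^ (2 * s + 1) * a3 ^ (2 * s + 1) = (q * z) ^ (2 * s + 1)"
    by (simp only: prod flip: power_mult_distrib)
  also have "\<dots> = (q ^ (2 * s + 1) * z ^ s) * z ^ Suc s"
    by (simp add: power_mult_distrib mult.assoc mult_2 flip: power_add)
  finally have signs: "- (a1 ^ (2 * s + 1)) * - (a2 ^ (2 * s + 1)) * - (a3 ^ (2 * s + 1))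
      = - (q ^ (2 * s + 1) * z ^ s * z ^ Suc s)"
    by simp
  have "- int s - 1 = - int (Suc s)"
    by simp
  then have zpow: "z powi (- int s - 1) = inverse (z ^ Suc s)"
    and sign: "(-1) powi (- int s - 1) = - ((-1) ^ s :: 'a)"
    by (simp_all only: power_int_minus power_int_of_nat) (simp flip: power_inverse)
  have qpow: "q powi (- binom2 (- int s - 1)) = inverse (q ^ (s choose 2) * q ^ (2 * s + 1))"
    and qpow0: "q powi (- binom2 (int s)) = inverse (q ^ (s choose 2))"
    by (simp_all only: binom2_minus_Suc binom2_of_nat power_int_minus power_int_of_nat)
      (simp add: power_add)
  show ?thesis
    unfolding signs zpow sign qpow qpow0 using q0 z0 by (simp add: field_simps)
qed

lemma qpoch_minus: "qpoch q a (- int m) = inverse (\<Prod>k\<in>{1..m}. 1 - a / q ^ k)"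
  by (cases "m = 0") (simp_all add: qpoch_def)

lemma qpoch_minus_eq:
  assumes "q \<noteq> 0" "x \<noteq> 0"
  shows "qpoch q x (- int m) = q ^ ((m choose 2) + m) / ((- x) ^ m * qpochhammer q (q / x) m)"
proof -
  have "(\<Prod>k\<in>{1..m}. 1 - x / q ^ k) * q ^ ((m choose 2) + m) = (- x) ^ m * qpochhammer q (q / x) m"
  proof (induction m)
    case (Suc m)
    have "(\<Prod>k\<in>{1..Suc m}. 1 - x / q ^ k) * q ^ ((Suc m choose 2) + Suc m)
        = ((\<Prod>k\<in>{1..m}. 1 - x / q ^ k) * q ^ ((m choose 2) + m)) * ((1 - x / q ^ Suc m) * q ^ Suc m)"
      by (simp add: Suc_choose_two prod.nat_ivl_Suc' power_add mult_ac)
    also have "\<dots> = (- x) ^ m * qpochhammer q (q / x) m * (q ^ Suc m - x)"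
      unfolding Suc using assms by (simp add: field_simps)
    also have "\<dots> = (- x) ^ Suc m * qpochhammer q (q / x) (Suc m)"
      using assms by (simp add: qpochhammer_Suc field_simps)
    finally show ?case .
  qed (simp add: numeral_2_eq_2)
  from this[symmetric] show ?thesis
    using assms by (simp add: qpoch_minus inverse_mult_distrib divide_inverse)
qed

lemma qpoch_minus_Suc:
  fixes q x :: complex
  assumes "q \<noteq> 0" "x \<noteq> 0"
  shows "qpoch q x (- int s - 1)
    = q ^ ((Suc s choose 2) + Suc s) / ((- x) ^ Suc s * (1 - q / x) * qpochhammer q (q\<^sup>2 / x) s)"
proof -
  have "- int s - 1 = - int (Suc s)"
    by simp
  moreover have "qpochhammer q (q / x) (Suc s) = (1 - q / x) * qpochhammer q (q\<^sup>2 / x) s"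
    by (simp add: qpochhammer_Suc_left power2_eq_square)
  ultimately show ?thesis
    using qpoch_minus_eq[OF assms, of "Suc s"] by (simp only:) (simp add: mult_ac)
qed

lemma qpoch_ratio_reflect:
  fixes q x :: complex
  assumes q0: "q \<noteq> 0" and x0: "x \<noteq> 0" and xq: "x \<noteq> q"
  shows "qpoch q x (- int s - 1) / qpoch q (q\<^sup>2 / x) (- int s - 1)
       = - ((q / x) ^ (2 * s + 1)) * (qpoch q x (int s) / qpoch q (q\<^sup>2 / x) (int s))"
proof -
  define Q where "Q = q ^ ((Suc s choose 2) + Suc s)"
  define U where "U = (- x) ^ Suc s * (1 - q / x)"
  define V where "V = (- (q\<^sup>2 / x)) ^ Suc s * (1 - x / q)"
  have "Q \<noteq> 0" "U \<noteq> 0"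
    using q0 x0 xq by (auto simp: Q_def U_def)
  have "q / (q\<^sup>2 / x) = x / q" "q\<^sup>2 / (q\<^sup>2 / x) = x" "q\<^sup>2 / x \<noteq> 0"
    using q0 x0 by (simp_all add: power2_eq_square)
  then have den: "qpoch q (q\<^sup>2 / x) (- int s - 1) = Q / (V * qpochhammer q x s)"
    using qpoch_minus_Suc[OF q0, of "q\<^sup>2 / x" s] by (simp add: Q_def V_def)
  have "V = U * ((q / x) ^ (2 * s + 1) * (q / x) * (- (x / q)))"
  proof -
    have h: "- (q\<^sup>2 / x) = (- x) * (q / x) ^ 2" "1 - x / q = - (x / q) * (1 - q / x)"
      using q0 x0 by (simp_all add: power2_eq_square field_simps)
    show ?thesis
      unfolding U_def V_def h power_mult_distrib power_mult[symmetric] by (simp add: mult_ac)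
  qed
  then have VU: "V / U = - ((q / x) ^ (2 * s + 1))"
    using \<open>U \<noteq> 0\<close> q0 x0 by simp
  have "qpoch q x (- int s - 1) / qpoch q (q\<^sup>2 / x) (- int s - 1)
      = (Q / (U * qpochhammer q (q\<^sup>2 / x) s)) / (Q / (V * qpochhammer q x s))"
    unfolding den qpoch_minus_Suc[OF q0 x0] by (simp add: Q_def U_def mult.assoc)
  also have "\<dots> = V / U * (qpochhammer q x s / qpochhammer q (q\<^sup>2 / x) s)"
    using \<open>Q \<noteq> 0\<close> by (simp add: divide_inverse inverse_mult_distrib mult_ac)
  finally show ?thesis
    by (simp add: VU)
qed

lemma qpochhammer_reverse:
  fixes q u z :: "'a::field"
  assumes q0: "q \<noteq> 0" and "u * z * q ^ s = q"
  shows "qpochhammer q u s * (- z) ^ s * q ^ (s choose 2) = qpochhammer q z s"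
  using assms(2)
proof (induction s arbitrary: u)
  case (Suc s)
  have "qpochhammer q (u * q) s * (- z) ^ s * q ^ (s choose 2) = qpochhammer q z s"
    by (rule Suc.IH) (use Suc.prems in \<open>simp add: mult_ac\<close>)
  then have "qpochhammer q u (Suc s) * (- z) ^ Suc s * q ^ (Suc s choose 2)
      = qpochhammer q z s * ((1 - u) * (- z) * q ^ s)"
    by (simp add: qpochhammer_Suc_left Suc_choose_two power_add mult_ac)
  also have "\<dots> = qpochhammer q z (Suc s)"
    using Suc.prems q0 by (simp add: qpochhammer_Suc algebra_simps)
  finally show ?case .
qed (simp add: numeral_2_eq_2)

section \<open>The coefficients of both sides\<close>

definition bailey_kernel :: "complex \<Rightarrow> nat \<Rightarrow> int \<Rightarrow> complex" where
  "bailey_kernel q n r = 1 / (qpoch q q (int n - r) * qpoch q q (int n + r + 1))"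

(* For k < 0 the paper's (q)_k has a pole; with inverse 0 = 0 it is 0 here, and so is 1 / (q)_k. *)
lemma qpoch_self_negative_eq_0: "q \<noteq> 0 \<Longrightarrow> k < 0 \<Longrightarrow> qpoch q q k = 0"
  by (auto simp: qpoch_def prod_zero_iff intro!: bexI[of _ 1])

lemma bailey_kernel_eq_0:
  "q \<noteq> 0 \<Longrightarrow> r \<notin> {- int n - 1 .. int n} \<Longrightarrow> bailey_kernel q n r = 0"
  by (auto simp: bailey_kernel_def qpoch_self_negative_eq_0)

lemma bailey_kernel_reflect: "bailey_kernel q n (- r - 1) = bailey_kernel q n r"
proof -
  have "int n - (- r - 1) = int n + r + 1" and "int n + (- r - 1) + 1 = int n - r"
    by simp_all
  then show ?thesis
    unfolding bailey_kernel_def by (simp only: mult.commute)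
qed

lemma power_neq_one_if_norm_less_one:
  fixes q :: "'a::real_normed_div_algebra"
  assumes "norm q < 1" "0 < i"
  shows "q ^ i \<noteq> 1"
proof
  assume "q ^ i = 1"
  then have "norm q ^ i = 1"
    by (metis norm_one norm_power)
  moreover have "norm q ^ i < 1"
    using assms by (simp add: power_less_one_iff)
  ultimately show False
    by simp
qed

locale bailey_parameters =
  fixes q r1 r2 :: complex and N :: nat
  assumes q_nonzero: "q \<noteq> 0"
    and q_not_root_of_unity: "\<forall>i>0. q ^ i \<noteq> 1"
    and r1_nonzero: "r1 \<noteq> 0" and r2_nonzero: "r2 \<noteq> 0"
    and r1_not_power: "\<forall>m\<ge>1. r1 \<noteq> q ^ m"
    and r2_not_power: "\<forall>m\<ge>1. r2 \<noteq> q ^ m"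
    and r1r2_not_power: "\<forall>j. r1 * r2 * q ^ j \<noteq> q ^ (N + 1)"
begin

definition lhs_coeff :: "int \<Rightarrow> complex" where
  "lhs_coeff n = (qpoch q r1 n * qpoch q r2 n * qpoch q (inverse (q ^ N)) n)
     / (qpoch q (q\<^sup>2 / r1) n * qpoch q (q\<^sup>2 / r2) n * qpoch q (q ^ (N + 2)) n)
     * (q ^ (2 + N) / (r1 * r2)) powi n * (-1) powi n * q powi (- binom2 n) / (1 - q)"

lemma lhs_coeff_reflect: "lhs_coeff (- int s - 1) = lhs_coeff (int s)"
proof -
  define z where "z = q ^ (2 + N) / (r1 * r2)"
  define R where "R x n = qpoch q x n / qpoch q (q\<^sup>2 / x) n" for x n
  have qN: "q\<^sup>2 / inverse (q ^ N) = q ^ (N + 2)"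
    by (simp add: power_add power2_eq_square divide_inverse)
  have split: "lhs_coeff n = R r1 n * R r2 n * R (inverse (q ^ N)) n
      * (z powi n * (-1) powi n * q powi (- binom2 n)) / (1 - q)" for n
    by (simp add: lhs_coeff_def R_def z_def qN times_divide_times_eq mult_ac)
  have R_reflect: "R x (- int s - 1) = - ((q / x) ^ (2 * s + 1)) * R x (int s)"
    if "x \<noteq> 0" "x \<noteq> q" for x
    unfolding R_def by (rule qpoch_ratio_reflect[OF q_nonzero that])
  have "r1 \<noteq> q" "r2 \<noteq> q" "inverse (q ^ N) \<noteq> q"
    using r1_not_power r2_not_power q_not_root_of_unity[rule_format, of "Suc N"] q_nonzero
    by (auto simp: field_simps)
  then have "lhs_coeff (- int s - 1) = R r1 (int s) * R r2 (int s) * R (inverse (q ^ N)) (int s)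
      * (- ((q / r1) ^ (2 * s + 1)) * - ((q / r2) ^ (2 * s + 1)) * - ((q / inverse (q ^ N)) ^ (2 * s + 1))
         * (z powi (- int s - 1) * (-1) powi (- int s - 1) * q powi (- binom2 (- int s - 1)))) / (1 - q)"
    using r1_nonzero r2_nonzero q_nonzero by (simp add: split R_reflect mult_ac)
  also have "- ((q / r1) ^ (2 * s + 1)) * - ((q / r2) ^ (2 * s + 1)) * - ((q / inverse (q ^ N)) ^ (2 * s + 1))
         * (z powi (- int s - 1) * (-1) powi (- int s - 1) * q powi (- binom2 (- int s - 1)))
      = z powi int s * (-1) powi int s * q powi (- binom2 (int s))"
    using q_nonzero r1_nonzero r2_nonzero
    by (intro powi_binom2_reflect) (simp_all add: z_def power_add power2_eq_square field_simps)
  finally show ?thesis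
    by (simp add: split)
qed

definition rhs_coeff :: "nat \<Rightarrow> complex" where
  "rhs_coeff n = qpochhammer q r1 n * qpochhammer q r2 n * qpochhammer q (inverse (q ^ N)) n * q ^ n
     / qpochhammer q (r1 * r2 / q ^ (N + 1)) n"

definition rhs_factor :: complex where
  "rhs_factor = qpochhammer q (q\<^sup>2) N * qpochhammer q (q\<^sup>2 / (r1 * r2)) N
     / (qpochhammer q (q\<^sup>2 / r1) N * qpochhammer q (q\<^sup>2 / r2) N)"

lemma qpochhammer_r1r2_nonzero: "qpochhammer q (r1 * r2 / q ^ (N + 1)) k \<noteq> 0"
  using r1r2_not_power q_nonzero by (auto simp: qpochhammer_eq_0_iff field_simps)

lemma qpochhammer_square_divide_r1r2_nonzero:
  assumes "k \<le> N"
  shows "qpochhammer q (q\<^sup>2 / (r1 * r2)) k \<noteq> 0"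
proof -
  have "q\<^sup>2 / (r1 * r2) * q ^ i \<noteq> 1" if "i < k" for i
  proof
    assume "q\<^sup>2 / (r1 * r2) * q ^ i = 1"
    then have "r1 * r2 * q ^ (N - 1 - i) = q ^ (i + 2 + (N - 1 - i))"
      using r1_nonzero r2_nonzero by (simp add: field_simps power_add power2_eq_square)
    also have "i + 2 + (N - 1 - i) = N + 1"
      using that assms by simp
    finally show False
      using r1r2_not_power by blast
  qed
  then show ?thesis
    by (simp add: qpochhammer_eq_0_iff)
qed

lemma rhs_coeff_mul_bailey_kernel:
  assumes "s \<le> N"
  shows "rhs_coeff (j + s) * bailey_kernel q (j + s) (int s)
    = qpochhammer q r1 s * qpochhammer q r2 s * qpochhammer q (inverse (q ^ N)) s * q ^ s
        / (qpochhammer q (r1 * r2 / q ^ (N + 1)) s * qpochhammer q q (2 * s + 1))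
      * saalschutz_term q (r1 * q ^ s) (r2 * q ^ s) (q ^ (2 * s + 2)) (N - s) j"
proof -
  define M w0 where "M = N - s" and "w0 = r1 * r2 / q ^ (N + 1)"
  define a b c where "a = r1 * q ^ s" and "b = r2 * q ^ s" and "c = q ^ (2 * s + 2)"
  have NM: "M + s = N"
    using assms by (simp add: M_def)
  have "int (j + s) - int s = int j" and "int (j + s) + int s + 1 = int (2 * s + 1 + j)"
    by simp_all
  moreover have "qpochhammer q q (2 * s + 1 + j) = qpochhammer q q (2 * s + 1) * qpochhammer q c j"
    unfolding qpochhammer_add by (simp add: c_def flip: power_Suc)
  ultimately have kernel: "bailey_kernel q (j + s) (int s)
      = 1 / (qpochhammer q q j * (qpochhammer q q (2 * s + 1) * qpochhammer q c j))"
    by (simp only: bailey_kernel_def qpoch_of_nat)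
  have "inverse (q ^ N) * q ^ s = inverse (q ^ M)"
    using q_nonzero by (simp add: power_add flip: NM)
  moreover have "w0 * q ^ s = a * b * q / (c * q ^ M)"
    using q_nonzero
    by (simp add: w0_def a_def b_def c_def power_add field_simps power2_eq_square mult_2 mult_2_right flip: NM)
  ultimately have "rhs_coeff (j + s)
      = (qpochhammer q r1 s * qpochhammer q a j) * (qpochhammer q r2 s * qpochhammer q b j)
        * (qpochhammer q (inverse (q ^ N)) s * qpochhammer q (inverse (q ^ M)) j) * (q ^ s * q ^ j)
        / (qpochhammer q w0 s * qpochhammer q (a * b * q / (c * q ^ M)) j)"
    unfolding rhs_coeff_def w0_def a_def b_def
    by (simp add: qpochhammer_add[of q _ s j, simplified add.commute] power_add mult_ac add.commute)
  then show ?thesis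
    unfolding kernel saalschutz_term_def M_def[symmetric] w0_def[symmetric]
      a_def[symmetric] b_def[symmetric] c_def[symmetric]
    by (simp add: divide_inverse inverse_mult_distrib mult_ac)
qed

lemma dual_sum_eq_saalschutz_sum:
  assumes "s \<le> N"
  shows "(\<Sum>n\<le>N. rhs_coeff n * bailey_kernel q n (int s))
    = qpochhammer q r1 s * qpochhammer q r2 s * qpochhammer q (inverse (q ^ N)) s * q ^ s
        / (qpochhammer q (r1 * r2 / q ^ (N + 1)) s * qpochhammer q q (2 * s + 1))
      * (\<Sum>j\<le>N - s. saalschutz_term q (r1 * q ^ s) (r2 * q ^ s) (q ^ (2 * s + 2)) (N - s) j)"
proof -
  let ?f = "\<lambda>n. rhs_coeff n * bailey_kernel q n (int s)"
  have "{..N} = {..<s} \<union> {s..N}"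
    using assms by auto
  then have "(\<Sum>n\<le>N. ?f n) = (\<Sum>n<s. ?f n) + (\<Sum>n=s..N. ?f n)"
    by (simp add: sum.union_disjoint ivl_disj_int)
  also have "(\<Sum>n<s. ?f n) = 0"
    using q_nonzero by (auto intro!: sum.neutral bailey_kernel_eq_0)
  also have "(\<Sum>n=s..N. ?f n) = (\<Sum>j\<le>N - s. ?f (j + s))"
    using sum.shift_bounds_cl_nat_ivl[of ?f 0 s "N - s"] assms by (simp add: atLeast0AtMost)
  finally show ?thesis
    by (simp add: rhs_coeff_mul_bailey_kernel[OF assms] sum_distrib_left)
qed

lemma saalschutz_sum_closed_form:
  assumes "s \<le> N"
  shows "(\<Sum>j\<le>N - s. saalschutz_term q (r1 * q ^ s) (r2 * q ^ s) (q ^ (2 * s + 2)) (N - s) j)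
    = qpochhammer q (q\<^sup>2 / r1 * q ^ s) (N - s) * qpochhammer q (q\<^sup>2 / r2 * q ^ s) (N - s)
      / (qpochhammer q (q ^ (2 * s + 2)) (N - s) * qpochhammer q (q\<^sup>2 / (r1 * r2)) (N - s))"
proof -
  define M where "M = N - s"
  define a b c where "a = r1 * q ^ s" and "b = r2 * q ^ s" and "c = q ^ (2 * s + 2)"
  have NM: "N = s + M"
    using assms by (simp add: M_def)
  have "a \<noteq> 0" "b \<noteq> 0" "c \<noteq> 0"
    using q_nonzero r1_nonzero r2_nonzero by (auto simp: a_def b_def c_def)
  have ca: "c / a = q\<^sup>2 / r1 * q ^ s" and cb: "c / b = q\<^sup>2 / r2 * q ^ s"
    and cab: "c / (a * b) = q\<^sup>2 / (r1 * r2)"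
    using q_nonzero r1_nonzero r2_nonzero
    by (simp_all add: a_def b_def c_def field_simps power_add power2_eq_square mult_2 mult_2_right)
  have "qpochhammer q c M \<noteq> 0"
    unfolding c_def using qpochhammer_power_nonzero[OF q_not_root_of_unity, of "2 * s + 1" M] by simp
  moreover have "qpochhammer q (c / (a * b)) M \<noteq> 0"
    unfolding cab by (rule qpochhammer_square_divide_r1r2_nonzero) (simp add: M_def)
  moreover have "\<forall>i<M. c * q ^ i \<noteq> 1"
  proof (intro allI impI)
    fix i
    have "q ^ (2 * s + 2 + i) \<noteq> 1"
      by (rule q_not_root_of_unity[rule_format]) simp
    then show "c * q ^ i \<noteq> 1"
      by (simp add: c_def power_add mult_ac)
  qed
  moreover have "\<forall>i\<le>M. a * b * q * q ^ i \<noteq> c * q ^ M"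
  proof (intro allI impI notI)
    fix i
    assume "a * b * q * q ^ i = c * q ^ M"
    then have "(r1 * r2 * q ^ (s + i)) * q ^ Suc s = q ^ (N + 1) * q ^ Suc s"
      by (simp add: a_def b_def c_def NM power_add power2_eq_square mult_2 mult_2_right mult_ac)
    then show False
      using r1r2_not_power q_nonzero by simp
  qed
  ultimately have "(\<Sum>j\<le>M. saalschutz_term q a b c M j)
      = qpochhammer q (c / a) M * qpochhammer q (c / b) M / (qpochhammer q c M * qpochhammer q (c / (a * b)) M)"
    using q_pfaff_saalschutz[OF q_nonzero q_not_root_of_unity \<open>a \<noteq> 0\<close> \<open>b \<noteq> 0\<close> \<open>c \<noteq> 0\<close>, of M]
    by (simp add: field_simps)
  from this[unfolded ca cb cab] show ?thesis
    by (simp add: a_def b_def c_def M_def)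
qed

lemma lhs_coeff_of_nat_eq:
  "lhs_coeff (int s) = qpochhammer q r1 s * qpochhammer q r2 s * qpochhammer q (inverse (q ^ N)) s
      / (qpochhammer q (q\<^sup>2 / r1) s * qpochhammer q (q\<^sup>2 / r2) s * qpochhammer q (q ^ (N + 2)) s)
      * (q ^ s / (- (r1 * r2 / q ^ (N + 1))) ^ s) / q ^ (s choose 2) / (1 - q)"
proof -
  have "(q ^ (2 + N) / (r1 * r2)) * (-1) * (- (r1 * r2 / q ^ (N + 1))) = q"
    using q_nonzero r1_nonzero r2_nonzero by (simp add: field_simps)
  then have "(q ^ (2 + N) / (r1 * r2)) ^ s * (-1) ^ s * (- (r1 * r2 / q ^ (N + 1))) ^ s = q ^ s"
    by (metis power_mult_distrib)
  then have "(q ^ (2 + N) / (r1 * r2)) ^ s * (-1) ^ s = q ^ s / (- (r1 * r2 / q ^ (N + 1))) ^ s"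
    using q_nonzero r1_nonzero r2_nonzero by (simp add: field_simps)
  then show ?thesis
    unfolding lhs_coeff_def qpoch_of_nat binom2_of_nat power_int_minus power_int_of_nat
    by (simp add: divide_inverse mult_ac)
qed

lemma rhs_factor_split:
  assumes "s \<le> N"
  shows "rhs_factor = qpochhammer q (q\<^sup>2) N * qpochhammer q (q\<^sup>2 / (r1 * r2)) (N - s)
      * qpochhammer q (q\<^sup>2 / (r1 * r2) * q ^ (N - s)) s
    / ((qpochhammer q (q\<^sup>2 / r1) s * qpochhammer q (q\<^sup>2 / r1 * q ^ s) (N - s))
       * (qpochhammer q (q\<^sup>2 / r2) s * qpochhammer q (q\<^sup>2 / r2 * q ^ s) (N - s)))"
proof -
  have "N = s + (N - s)" "N = (N - s) + s"
    using assms by simp_all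
  then have "qpochhammer q (q\<^sup>2 / r1) N = qpochhammer q (q\<^sup>2 / r1) s * qpochhammer q (q\<^sup>2 / r1 * q ^ s) (N - s)"
    and "qpochhammer q (q\<^sup>2 / r2) N = qpochhammer q (q\<^sup>2 / r2) s * qpochhammer q (q\<^sup>2 / r2 * q ^ s) (N - s)"
    and "qpochhammer q (q\<^sup>2 / (r1 * r2)) N
      = qpochhammer q (q\<^sup>2 / (r1 * r2)) (N - s) * qpochhammer q (q\<^sup>2 / (r1 * r2) * q ^ (N - s)) s"
    by (metis qpochhammer_add)+
  then show ?thesis
    unfolding rhs_factor_def by (simp only: mult.assoc)
qed

lemma lhs_coeff_of_nat:
  assumes sN: "s \<le> N"
  shows "lhs_coeff (int s) = rhs_factor * (\<Sum>n\<le>N. rhs_coeff n * bailey_kernel q n (int s))"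
proof -
  define M where "M = N - s"
  define w0 where "w0 = r1 * r2 / q ^ (N + 1)"
  define v where "v = q\<^sup>2 / (r1 * r2) * q ^ M"
  have w0: "w0 \<noteq> 0"
    using q_nonzero r1_nonzero r2_nonzero by (simp add: w0_def)
  have "qpochhammer q v s * (- w0) ^ s * q ^ (s choose 2) = qpochhammer q w0 s"
    using sN q_nonzero r1_nonzero r2_nonzero
    by (intro qpochhammer_reverse) (simp_all add: v_def w0_def M_def field_simps flip: power_add)
  then have reverse: "qpochhammer q v s = qpochhammer q w0 s / ((- w0) ^ s * q ^ (s choose 2))"
    using w0 q_nonzero by (simp add: field_simps)
  have "qpochhammer q q (2 * s + 1) * qpochhammer q (q ^ (2 * s + 2)) M
      = (1 - q) * qpochhammer q (q\<^sup>2) N * qpochhammer q (q ^ (N + 2)) s"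
    using qpochhammer_self_split[of q s M] sN by (simp add: M_def)
  moreover have nz_M: "qpochhammer q (q ^ (2 * s + 2)) M \<noteq> 0"
    using qpochhammer_power_nonzero[OF q_not_root_of_unity, of "2 * s + 1" M] by simp
  ultimately have qfact: "qpochhammer q q (2 * s + 1)
      = (1 - q) * qpochhammer q (q\<^sup>2) N * qpochhammer q (q ^ (N + 2)) s / qpochhammer q (q ^ (2 * s + 2)) M"
    by (simp add: field_simps)
  have "qpochhammer q (q\<^sup>2 / r1 * q ^ e) k \<noteq> 0" "qpochhammer q (q\<^sup>2 / r2 * q ^ e) k \<noteq> 0" for e k
    by (intro qpochhammer_square_divide_nonzero r1_nonzero r1_not_power r2_nonzero r2_not_power)+
  moreover have "qpochhammer q (q ^ (N + 2)) s \<noteq> 0" "qpochhammer q (q\<^sup>2) N \<noteq> 0"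
    "qpochhammer q w0 s \<noteq> 0" "1 - q \<noteq> 0" "qpochhammer q (q\<^sup>2 / (r1 * r2)) M \<noteq> 0"
    using qpochhammer_power_nonzero[OF q_not_root_of_unity, of "N + 1" s]
      qpochhammer_power_nonzero[OF q_not_root_of_unity, of 1 N]
      qpochhammer_r1r2_nonzero[of s] q_not_root_of_unity[rule_format, of 1]
      qpochhammer_square_divide_r1r2_nonzero[of M]
    by (auto simp: w0_def M_def power2_eq_square)
  ultimately show ?thesis
    unfolding dual_sum_eq_saalschutz_sum[OF sN, folded M_def w0_def]
      saalschutz_sum_closed_form[OF sN, folded M_def] lhs_coeff_of_nat_eq[folded w0_def]
      rhs_factor_split[OF sN, folded M_def, folded v_def] qfact reverse
    using w0 q_nonzero nz_M
      qpochhammer_square_divide_nonzero[OF r1_nonzero r1_not_power, of 0 s]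
      qpochhammer_square_divide_nonzero[OF r2_nonzero r2_not_power, of 0 s]
    by (simp add: field_simps)
qed

lemma lhs_coeff_eq_dual_sum:
  assumes "r \<in> {- int N - 1 .. int N}"
  shows "lhs_coeff r = rhs_factor * (\<Sum>n\<le>N. rhs_coeff n * bailey_kernel q n r)"
proof (cases "0 \<le> r")
  case True
  then obtain s where "r = int s" "s \<le> N"
    using assms by (intro that[of "nat r"]) auto
  then show ?thesis
    by (simp add: lhs_coeff_of_nat)
next
  case False
  then obtain s where "r = - int s - 1" "s \<le> N"
    using assms by (intro that[of "nat (- r - 1)"]) auto
  then show ?thesis
    by (simp add: lhs_coeff_reflect bailey_kernel_reflect lhs_coeff_of_nat)
qed

lemma lhs_coeff_eq_0:
  assumes "r \<notin> {- int N - 1 .. int N}"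
  shows "lhs_coeff r = 0"
proof (cases "int N < r")
  case True
  then obtain m where "r = int m" "N < m"
    by (intro that[of "nat r"]) auto
  then show ?thesis
    using q_nonzero by (simp add: lhs_coeff_def qpochhammer_inverse_power_eq_0)
next
  case False
  then obtain m where m: "r = - int m" "N + 2 \<le> m"
    using assms by (intro that[of "nat (- r)"]) auto
  have "(\<Prod>k\<in>{1..m}. 1 - q ^ (N + 2) / q ^ k) = 0"
    using m q_nonzero by (auto intro!: prod_zero bexI[of _ "N + 2"])
  then have "qpoch q (q ^ (N + 2)) r = 0"
    by (simp add: m qpoch_minus)
  then show ?thesis
    by (simp add: lhs_coeff_def)
qed

lemma rhs_coeff_eq_0: "N < n \<Longrightarrow> rhs_coeff n = 0"
  using q_nonzero by (simp add: rhs_coeff_def qpochhammer_inverse_power_eq_0)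

lemma lhs_infsum_eq_sum:
  "(\<Sum>\<^sub>\<infinity>r. \<alpha> r * lhs_coeff r) = (\<Sum>r\<in>{- int N - 1 .. int N}. \<alpha> r * lhs_coeff r)"
  by (intro infsumI has_sum_finite_neutralI) (auto simp: lhs_coeff_eq_0)

lemma rhs_infsum_eq_sum:
  "(\<Sum>\<^sub>\<infinity>n. rhs_coeff n * \<beta> n) = (\<Sum>n\<le>N. rhs_coeff n * \<beta> n)"
  by (intro infsumI has_sum_finite_neutralI) (auto simp: rhs_coeff_eq_0)

lemma bailey_infsum_eq_sum:
  assumes "n \<le> N"
  shows "(\<Sum>\<^sub>\<infinity>r. \<alpha> r * bailey_kernel q n r) = (\<Sum>r\<in>{- int N - 1 .. int N}. \<alpha> r * bailey_kernel q n r)"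
  using assms q_nonzero by (intro infsumI has_sum_finite_neutralI) (auto simp: bailey_kernel_eq_0)

end

theorem corollary2p3:
  fixes q \<rho>1 \<rho>2 :: complex and N :: nat
    and \<alpha> :: "int \<Rightarrow> complex" and \<beta> :: "nat \<Rightarrow> complex"
  assumes hq0: "0 < norm q" and hq1: "norm q < 1"
    and hr1: "\<rho>1 \<noteq> 0" and hr2: "\<rho>2 \<noteq> 0"
    and wd1: "\<forall>m::nat. 1 \<le> m \<longrightarrow> \<rho>1 \<noteq> q ^ m"
    and wd2: "\<forall>m::nat. 1 \<le> m \<longrightarrow> \<rho>2 \<noteq> q ^ m"
    and wd3: "\<forall>n::nat. qpoch q (\<rho>1 * \<rho>2 / q ^ (N + 1)) (int n) \<noteq> 0"
    and bailey: "\<forall>n::nat. \<beta> n =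
        (\<Sum>\<^sub>\<infinity>r::int. \<alpha> r / (qpoch q q (int n - r) * qpoch q q (int n + r + 1)))"
  shows "(\<Sum>\<^sub>\<infinity>n::int.
            (qpoch q \<rho>1 n * qpoch q \<rho>2 n * qpoch q (inverse (q ^ N)) n)
            / (qpoch q (q\<^sup>2 / \<rho>1) n * qpoch q (q\<^sup>2 / \<rho>2) n * qpoch q (q ^ (N + 2)) n)
            * (q ^ (2 + N) / (\<rho>1 * \<rho>2)) powi n * (-1) powi n * q powi (- binom2 n)
            * \<alpha> n / (1 - q))
       = (qpoch q (q\<^sup>2) (int N) * qpoch q (q\<^sup>2 / (\<rho>1 * \<rho>2)) (int N))
         / (qpoch q (q\<^sup>2 / \<rho>1) (int N) * qpoch q (q\<^sup>2 / \<rho>2) (int N))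
         * (\<Sum>\<^sub>\<infinity>n::nat.
              qpoch q \<rho>1 (int n) * qpoch q \<rho>2 (int n) * qpoch q (inverse (q ^ N)) (int n)
              * q ^ n * \<beta> n / qpoch q (\<rho>1 * \<rho>2 / q ^ (N + 1)) (int n))"
proof -
  have "q \<noteq> 0"
    using hq0 by auto
  moreover have "\<rho>1 * \<rho>2 * q ^ j \<noteq> q ^ (N + 1)" for j
  proof
    assume "\<rho>1 * \<rho>2 * q ^ j = q ^ (N + 1)"
    then have "qpochhammer q (\<rho>1 * \<rho>2 / q ^ (N + 1)) (Suc j) = 0"
      using \<open>q \<noteq> 0\<close> by (auto simp: qpochhammer_eq_0_iff field_simps intro!: exI[of _ j])
    with wd3 show False
      by (metis qpoch_of_nat)
  qed
  ultimately interpret bailey_parameters q \<rho>1 \<rho>2 N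
    using hq1 hr1 hr2 wd1 wd2 by unfold_locales (auto simp: power_neq_one_if_norm_less_one)
  define I where "I = {- int N - 1 .. int N}"
  have "\<beta> n = (\<Sum>r\<in>I. \<alpha> r * bailey_kernel q n r)" if "n \<le> N" for n
    using bailey bailey_infsum_eq_sum[OF that] by (simp add: I_def bailey_kernel_def)
  then have "rhs_factor * (\<Sum>n\<le>N. rhs_coeff n * \<beta> n)
      = (\<Sum>r\<in>I. \<alpha> r * (rhs_factor * (\<Sum>n\<le>N. rhs_coeff n * bailey_kernel q n r)))"
    by (simp add: sum_distrib_left sum_distrib_right sum.swap[of _ "{..N}" I] mult_ac)
  also have "\<dots> = (\<Sum>r\<in>I. \<alpha> r * lhs_coeff r)"
    by (simp add: I_def lhs_coeff_eq_dual_sum)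
  finally show ?thesis
    using lhs_infsum_eq_sum[of \<alpha>] rhs_infsum_eq_sum[of \<beta>]
    by (simp add: I_def lhs_coeff_def rhs_coeff_def rhs_factor_def divide_inverse mult_ac)
qed

end
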